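(* Let $\kappa$ be an infinite cardinal. (i) If $\kappa=\aleph_1$, then neither $l^\infty(\kappa)$ nor $B(l^2(\kappa))$ has a regular singular state. (ii) If $\kappa$ is Ulam real-valued measurable, then both $l^\infty(\kappa)$ and $B(l^2(\kappa))$ have regular singular states.
   Context: $\kappa$ is Ulam real-valued measurable if there is a countably additive probability measure on all subsets of $\kappa$ vanishing on singletons. A state $\phi$ on a von Neumann algebra is regular if $\phi(q_n)=0$ for all $n$ implies $\phi(\bigvee q_n)=0$ for any countable set of projections $\{q_n\}$. A state on $l^\infty(\kappa)$ is singular if it vanishes on finitely supported functions; on $B(l^2(\kappa))$, if it vanishes on the compact operators. *)

theory Defs
  imports "HOL-Analysis.Analysis"
begin

section \<open>Cardinal notions on the index type 'k (the cardinal kappa = |UNIV :: 'k set|)\<close>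

definition is_aleph1 :: "'k itself \<Rightarrow> bool" where
  "is_aleph1 _ \<longleftrightarrow> (card_of (UNIV :: 'k set), cardSuc natLeq) \<in> ordIso"

definition ulam_rvm :: "'k itself \<Rightarrow> bool" where
  "ulam_rvm _ \<longleftrightarrow> (\<exists>\<mu> :: 'k set \<Rightarrow> real.
      (\<forall>A. \<mu> A \<ge> 0) \<and> \<mu> UNIV = 1 \<and> (\<forall>x. \<mu> {x} = 0) \<and>
      (\<forall>A :: nat \<Rightarrow> 'k set. disjoint_family A \<longrightarrow> (\<lambda>n. \<mu> (A n)) sums \<mu> (\<Union>n. A n)))"

definition cnonneg :: "complex \<Rightarrow> bool" where
  "cnonneg z \<longleftrightarrow> Im z = 0 \<and> Re z \<ge> 0"

definition linf :: "('k \<Rightarrow> complex) set" where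
  "linf = {f. bounded (range f)}"

definition linf_proj :: "('k \<Rightarrow> complex) \<Rightarrow> bool" where
  "linf_proj p \<longleftrightarrow> p \<in> linf \<and> (\<forall>x. p x * p x = p x \<and> cnj (p x) = p x)"

definition linf_proj_le :: "('k \<Rightarrow> complex) \<Rightarrow> ('k \<Rightarrow> complex) \<Rightarrow> bool" where
  "linf_proj_le p q \<longleftrightarrow> (\<forall>x. q x * p x = p x)"

definition linf_proj_sup :: "(nat \<Rightarrow> 'k \<Rightarrow> complex) \<Rightarrow> ('k \<Rightarrow> complex) \<Rightarrow> bool" where
  "linf_proj_sup q Q \<longleftrightarrow> linf_proj Q \<and> (\<forall>n. linf_proj_le (q n) Q) \<and>
     (\<forall>R. linf_proj R \<and> (\<forall>n. linf_proj_le (q n) R) \<longrightarrow> linf_proj_le Q R)"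

definition linf_state :: "(('k \<Rightarrow> complex) \<Rightarrow> complex) \<Rightarrow> bool" where
  "linf_state \<phi> \<longleftrightarrow>
     (\<forall>f\<in>linf. \<forall>g\<in>linf. \<forall>a b. \<phi> (\<lambda>x. a * f x + b * g x) = a * \<phi> f + b * \<phi> g) \<and>
     (\<forall>f\<in>linf. (\<forall>x. cnonneg (f x)) \<longrightarrow> cnonneg (\<phi> f)) \<and>
     \<phi> (\<lambda>_. 1) = 1"

definition linf_regular :: "(('k \<Rightarrow> complex) \<Rightarrow> complex) \<Rightarrow> bool" where
  "linf_regular \<phi> \<longleftrightarrow> (\<forall>q Q. (\<forall>n. linf_proj (q n)) \<and> linf_proj_sup q Q \<and> (\<forall>n. \<phi> (q n) = 0)
       \<longrightarrow> \<phi> Q = 0)"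

definition linf_singular :: "(('k \<Rightarrow> complex) \<Rightarrow> complex) \<Rightarrow> bool" where
  "linf_singular \<phi> \<longleftrightarrow> (\<forall>f. finite {x. f x \<noteq> 0} \<longrightarrow> \<phi> f = 0)"

definition l2 :: "('k \<Rightarrow> complex) set" where
  "l2 = {f. (\<lambda>x. (cmod (f x))\<^sup>2) summable_on UNIV}"

definition l2norm :: "('k \<Rightarrow> complex) \<Rightarrow> real" where
  "l2norm f = sqrt (infsum (\<lambda>x. (cmod (f x))\<^sup>2) UNIV)"

definition l2inner :: "('k \<Rightarrow> complex) \<Rightarrow> ('k \<Rightarrow> complex) \<Rightarrow> complex" where
  "l2inner f g = infsum (\<lambda>x. f x * cnj (g x)) UNIV"

type_synonym 'k l2op = "('k \<Rightarrow> complex) \<Rightarrow> ('k \<Rightarrow> complex)"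

text \<open>Bounded linear operators on l^2 (only their values on l^2 matter).\<close>
definition bop :: "'k l2op \<Rightarrow> bool" where
  "bop T \<longleftrightarrow> (\<forall>f\<in>l2. T f \<in> l2) \<and>
     (\<forall>f\<in>l2. \<forall>g\<in>l2. \<forall>a b. T (\<lambda>x. a * f x + b * g x) = (\<lambda>x. a * T f x + b * T g x)) \<and>
     (\<exists>C. \<forall>f\<in>l2. l2norm (T f) \<le> C * l2norm f)"

definition op_lin :: "complex \<Rightarrow> 'k l2op \<Rightarrow> complex \<Rightarrow> 'k l2op \<Rightarrow> 'k l2op" where
  "op_lin a S b T = (\<lambda>f x. a * S f x + b * T f x)"

definition op_eq :: "'k l2op \<Rightarrow> 'k l2op \<Rightarrow> bool" where
  "op_eq S T \<longleftrightarrow> (\<forall>f\<in>l2. S f = T f)"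

definition bproj :: "'k l2op \<Rightarrow> bool" where
  "bproj P \<longleftrightarrow> bop P \<and> op_eq (P \<circ> P) P \<and> (\<forall>f\<in>l2. \<forall>g\<in>l2. l2inner (P f) g = l2inner f (P g))"

definition bproj_le :: "'k l2op \<Rightarrow> 'k l2op \<Rightarrow> bool" where
  "bproj_le P Q \<longleftrightarrow> op_eq (Q \<circ> P) P"

definition bproj_sup :: "(nat \<Rightarrow> 'k l2op) \<Rightarrow> 'k l2op \<Rightarrow> bool" where
  "bproj_sup q Q \<longleftrightarrow> bproj Q \<and> (\<forall>n. bproj_le (q n) Q) \<and>
     (\<forall>R. bproj R \<and> (\<forall>n. bproj_le (q n) R) \<longrightarrow> bproj_le Q R)"

definition cpt_op :: "'k l2op \<Rightarrow> bool" where
  "cpt_op T \<longleftrightarrow> bop T \<and> (\<forall>(f :: nat \<Rightarrow> 'k \<Rightarrow> complex). (\<forall>n. f n \<in> l2 \<and> l2norm (f n) \<le> 1) \<longrightarrow>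
     (\<exists>r :: nat \<Rightarrow> nat. strict_mono r \<and> (\<forall>e>0. \<exists>N. \<forall>m\<ge>N. \<forall>n\<ge>N.
        l2norm (\<lambda>x. T (f (r m)) x - T (f (r n)) x) < e)))"

definition bl2_state :: "('k l2op \<Rightarrow> complex) \<Rightarrow> bool" where
  "bl2_state \<phi> \<longleftrightarrow>
     (\<forall>S T a b. bop S \<and> bop T \<longrightarrow> \<phi> (op_lin a S b T) = a * \<phi> S + b * \<phi> T) \<and>
     (\<forall>T. bop T \<and> (\<forall>f\<in>l2. cnonneg (l2inner (T f) f)) \<longrightarrow> cnonneg (\<phi> T)) \<and>
     \<phi> id = 1"

definition bl2_regular :: "('k l2op \<Rightarrow> complex) \<Rightarrow> bool" where
  "bl2_regular \<phi> \<longleftrightarrow> (\<forall>q Q. (\<forall>n. bproj (q n)) \<and> bproj_sup q Q \<and> (\<forall>n. \<phi> (q n) = 0)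
       \<longrightarrow> \<phi> Q = 0)"

definition bl2_singular :: "('k l2op \<Rightarrow> complex) \<Rightarrow> bool" where
  "bl2_singular \<phi> \<longleftrightarrow> (\<forall>T. cpt_op T \<longrightarrow> \<phi> T = 0)"

end

(*
  A regular singular state restricts, on the indicator functions of subsets of \<kappa> (resp. on
  the diagonal projections of B(l\<^sup>2(\<kappa>))), to a finitely additive probability on all subsets
  of \<kappa> that vanishes on points and under which countable unions of null sets are null.
  On \<aleph>\<^sub>1 there is no such charge, by Ulam's matrix argument: enumerating the countable
  initial segments of \<omega>\<^sub>1 yields rows of pairwise disjoint sets such that every column
  contains a set of positive charge, so some row contains uncountably many disjoint sets of
  positive charge.

  Conversely, a real-valued measurable \<kappa> carries a diffuse probability measure \<mu> on all
  subsets, and integrating against \<mu> a bounded function, resp. the diagonal x \<mapsto> \<langle>T e\<^sub>x, e\<^sub>x\<rangle>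
  of an operator, gives a state. It is singular because finite sets are \<mu>-null and the
  diagonal of a compact operator tends to 0. It is regular because the diagonal of a
  projection is non-negative, so a projection of state 0 has diagonal 0 \<mu>-almost everywhere,
  and a supremum of projections whose diagonals all vanish at x lies below the projection
  onto the orthogonal complement of e\<^sub>x.
*)
theory Submission
  imports Defs "HOL-Library.Countable_Set_Type" "HOL-Probability.Probability_Measure"
begin

section \<open>Basis vectors, projections and compact operators on \<open>l\<^sup>2\<close>\<close>

definition basis_vec :: "'k \<Rightarrow> 'k \<Rightarrow> complex" where
  "basis_vec a = indicator {a}"

definition coord_proj :: "'k set \<Rightarrow> 'k l2op" where
  "coord_proj A f x = indicator A x * f x"

lemma infsum_UNIV_eq_single:
  assumes "\<And>y. y \<noteq> a \<Longrightarrow> f y = 0"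
  shows "infsum f UNIV = f a"
proof -
  have "infsum f UNIV = infsum f {a}"
    by (rule infsum_cong_neutral) (use assms in auto)
  then show ?thesis by simp
qed

lemma l2inner_basis_vec [simp]: "l2inner h (basis_vec a) = h a"
  unfolding l2inner_def basis_vec_def by (subst infsum_UNIV_eq_single[of a]) auto

lemma basis_vec_self [simp]: "basis_vec a a = 1"
  by (simp add: basis_vec_def)

lemma basis_vec_in_l2: "basis_vec a \<in> l2"
proof -
  have "(\<lambda>x. (cmod (basis_vec a x))\<^sup>2) summable_on {a}" by simp
  then show ?thesis unfolding l2_def mem_Collect_eq
    by (rule summable_on_cong_neutral[THEN iffD1, rotated -1]) (auto simp: basis_vec_def)
qed

lemma l2norm_basis_vec [simp]: "l2norm (basis_vec a) = 1"
  unfolding l2norm_def by (subst infsum_UNIV_eq_single[of a]) (auto simp: basis_vec_def)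

lemma l2_summable: "f \<in> l2 \<Longrightarrow> (\<lambda>x. (cmod (f x))\<^sup>2) summable_on UNIV"
  unfolding l2_def by simp

lemma norm_le_l2norm:
  assumes "f \<in> l2"
  shows "cmod (f x) \<le> l2norm f"
proof -
  have "(\<Sum>y\<in>{x}. (cmod (f y))\<^sup>2) \<le> infsum (\<lambda>y. (cmod (f y))\<^sup>2) UNIV"
    by (rule finite_sum_le_infsum) (use l2_summable[OF assms] in auto)
  then show ?thesis
    unfolding l2norm_def by (intro real_le_rsqrt) (auto simp: infsum_nonneg)
qed

lemma l2_dominated:
  assumes "g \<in> l2" "\<And>x. cmod (f x) \<le> cmod (g x)"
  shows "f \<in> l2"
  unfolding l2_def mem_Collect_eq
  by (rule summable_on_comparison_test[OF l2_summable[OF assms(1)]])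
     (use assms(2) in \<open>auto intro: power_mono\<close>)

lemma l2_diff:
  assumes "f \<in> l2" "g \<in> l2"
  shows "(\<lambda>x. f x - g x) \<in> l2"
proof -
  have s: "(\<lambda>x. 2 * (cmod (f x))\<^sup>2 + 2 * (cmod (g x))\<^sup>2) summable_on UNIV"
    using l2_summable[OF assms(1)] l2_summable[OF assms(2)]
    by (intro summable_on_add summable_on_cmult_right)
  have "(cmod (f x - g x))\<^sup>2 \<le> 2 * (cmod (f x))\<^sup>2 + 2 * (cmod (g x))\<^sup>2" for x
  proof -
    have "(cmod (f x - g x))\<^sup>2 \<le> (cmod (f x) + cmod (g x))\<^sup>2"
      by (intro power_mono norm_triangle_ineq4) auto
    also have "\<dots> \<le> 2 * (cmod (f x))\<^sup>2 + 2 * (cmod (g x))\<^sup>2"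
      by (smt (verit) sum_squares_bound power2_sum)
    finally show ?thesis .
  qed
  then show ?thesis unfolding l2_def mem_Collect_eq
    by (intro summable_on_comparison_test[OF s]) auto
qed

lemma l2inner_self:
  assumes "h \<in> l2"
  shows "l2inner h h = of_real (infsum (\<lambda>x. (cmod (h x))\<^sup>2) UNIV)"
proof -
  have "((\<lambda>x. of_real ((cmod (h x))\<^sup>2) :: complex) has_sum
          of_real (infsum (\<lambda>x. (cmod (h x))\<^sup>2) UNIV)) UNIV"
    by (rule has_sum_of_real_iff[THEN iffD2]) (rule has_sum_infsum[OF l2_summable[OF assms]])
  moreover have "(\<lambda>x. of_real ((cmod (h x))\<^sup>2) :: complex) = (\<lambda>x. h x * cnj (h x))"
    by (rule ext) (simp only: complex_mult_cnj cmod_power2)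
  ultimately show ?thesis unfolding l2inner_def by (simp add: infsumI)
qed

lemma finite_l2_large_coords:
  assumes "g \<in> l2" "d > 0"
  shows "finite {x. d \<le> cmod (g x)}"
proof (rule ccontr)
  let ?S = "infsum (\<lambda>x. (cmod (g x))\<^sup>2) UNIV"
  assume "infinite {x. d \<le> cmod (g x)}"
  then obtain F where F: "F \<subseteq> {x. d \<le> cmod (g x)}" "finite F" "card F = nat \<lceil>?S / d\<^sup>2\<rceil> + 1"
    using infinite_arbitrarily_large by blast
  have "(\<Sum>x\<in>F. d\<^sup>2) \<le> (\<Sum>x\<in>F. (cmod (g x))\<^sup>2)"
    using F assms(2) by (intro sum_mono power_mono) auto
  also have "\<dots> \<le> ?S"
    by (rule finite_sum_le_infsum) (use l2_summable[OF assms(1)] F in auto)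
  finally have "real (card F) * d\<^sup>2 \<le> ?S" by simp
  moreover have "real (card F) > ?S / d\<^sup>2" using F(3) by linarith
  ultimately show False using assms(2) by (simp add: field_simps)
qed

lemma l2_eq_if_eq_on_support:
  assumes "g \<in> l2" "h \<in> l2"
    and g0: "\<And>x. x \<notin> U \<Longrightarrow> g x = 0" and hg: "\<And>x. x \<in> U \<Longrightarrow> h x = g x"
    and norms: "infsum (\<lambda>x. (cmod (h x))\<^sup>2) UNIV = infsum (\<lambda>x. (cmod (g x))\<^sup>2) UNIV"
  shows "h = g"
proof
  fix y
  have "((\<lambda>x. (cmod (h x))\<^sup>2 + - (cmod (g x))\<^sup>2) has_sum
      (infsum (\<lambda>x. (cmod (h x))\<^sup>2) UNIV + - infsum (\<lambda>x. (cmod (g x))\<^sup>2) UNIV)) UNIV"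
    by (intro has_sum_add has_sum_infsum l2_summable[OF assms(2)])
       (simp add: has_sum_uminus has_sum_infsum l2_summable[OF assms(1)])
  then have "((\<lambda>x. (cmod (h x))\<^sup>2 + - (cmod (g x))\<^sup>2) has_sum 0) UNIV"
    by (simp add: norms)
  moreover have "0 \<le> (cmod (h x))\<^sup>2 + - (cmod (g x))\<^sup>2" for x
    using hg g0 by (cases "x \<in> U") auto
  ultimately have "(cmod (h y))\<^sup>2 + - (cmod (g y))\<^sup>2 = 0"
    by (intro nonneg_has_sum_le_0D) auto
  then show "h y = g y"
    using hg g0 by (cases "y \<in> U") auto
qed

lemma bop_l2: "bop T \<Longrightarrow> f \<in> l2 \<Longrightarrow> T f \<in> l2"
  unfolding bop_def by blast

lemma bop_diag_bounded:
  assumes "bop T"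
  shows "\<exists>C. \<forall>x. cmod (T (basis_vec x) x) \<le> C"
proof -
  obtain C where C: "\<And>f. f \<in> l2 \<Longrightarrow> l2norm (T f) \<le> C * l2norm f"
    using assms unfolding bop_def by blast
  have "cmod (T (basis_vec x) x) \<le> C" for x
    using norm_le_l2norm[OF bop_l2[OF assms basis_vec_in_l2]] C[OF basis_vec_in_l2]
    by (metis l2norm_basis_vec mult.right_neutral order_trans)
  then show ?thesis by blast
qed

lemma bproj_bop: "bproj P \<Longrightarrow> bop P"
  unfolding bproj_def by blast

lemma bproj_selfadj: "bproj P \<Longrightarrow> f \<in> l2 \<Longrightarrow> g \<in> l2 \<Longrightarrow> l2inner (P f) g = l2inner f (P g)"
  unfolding bproj_def by blast

lemma bproj_idem: "bproj P \<Longrightarrow> f \<in> l2 \<Longrightarrow> P (P f) = P f"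
  unfolding bproj_def op_eq_def by auto

lemma bproj_diag:
  assumes P: "bproj P"
  shows "P (basis_vec x) x = of_real (infsum (\<lambda>y. (cmod (P (basis_vec x) y))\<^sup>2) UNIV)"
proof -
  have Pe: "P (basis_vec x) \<in> l2" by (rule bop_l2[OF bproj_bop[OF P] basis_vec_in_l2])
  have "P (basis_vec x) x = l2inner (P (P (basis_vec x))) (basis_vec x)"
    using bproj_idem[OF P basis_vec_in_l2] by simp
  also have "\<dots> = l2inner (P (basis_vec x)) (P (basis_vec x))"
    by (rule bproj_selfadj[OF P Pe basis_vec_in_l2])
  also have "\<dots> = of_real (infsum (\<lambda>y. (cmod (P (basis_vec x) y))\<^sup>2) UNIV)"
    by (rule l2inner_self[OF Pe])
  finally show ?thesis .
qed

lemma cnonneg_bproj_diag: "bproj P \<Longrightarrow> cnonneg (P (basis_vec x) x)"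
  by (subst bproj_diag) (auto simp: cnonneg_def infsum_nonneg)

text \<open>Since \<open>\<langle>P e\<^sub>x, e\<^sub>x\<rangle> = \<parallel>P e\<^sub>x\<parallel>\<^sup>2\<close>, such a projection kills \<open>e\<^sub>x\<close>; the claim
  then follows by self-adjointness.\<close>
lemma bproj_vanishes_if_diag_eq_0:
  assumes P: "bproj P" and diag: "P (basis_vec x) x = 0" and f: "f \<in> l2"
  shows "P f x = 0"
proof -
  have Pe: "P (basis_vec x) \<in> l2" by (rule bop_l2[OF bproj_bop[OF P] basis_vec_in_l2])
  have "P (basis_vec x) = (\<lambda>_. 0)"
  proof
    fix y
    have "infsum (\<lambda>y. (cmod (P (basis_vec x) y))\<^sup>2) UNIV = 0"
      using bproj_diag[OF P, of x] diag by simp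
    then have "(cmod (P (basis_vec x) y))\<^sup>2 = 0"
      by (intro nonneg_infsum_le_0D[OF _ l2_summable[OF Pe]]) auto
    then show "P (basis_vec x) y = 0" by simp
  qed
  moreover have "P f x = l2inner f (P (basis_vec x))"
    using bproj_selfadj[OF P f basis_vec_in_l2] by simp
  ultimately show ?thesis by (simp add: l2inner_def)
qed

lemma bproj_fixes_if_fixes_basis:
  assumes R: "bproj R" and fix_basis: "\<And>x. x \<in> U \<Longrightarrow> R (basis_vec x) = basis_vec x"
    and g: "g \<in> l2" and g0: "\<And>x. x \<notin> U \<Longrightarrow> g x = 0"
  shows "R g = g"
proof -
  define h where "h = R g"
  have h: "h \<in> l2" unfolding h_def by (rule bop_l2[OF bproj_bop[OF R] g])
  have hg: "h x = g x" if "x \<in> U" for x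
  proof -
    have "h x = l2inner g (R (basis_vec x))"
      unfolding h_def using bproj_selfadj[OF R g basis_vec_in_l2] by simp
    then show ?thesis using fix_basis[OF that] by simp
  qed
  have "l2inner h h = l2inner g h"
    unfolding h_def using bproj_selfadj[OF R g h[unfolded h_def]] bproj_idem[OF R g] by simp
  also have "\<dots> = l2inner g g"
    unfolding l2inner_def by (rule infsum_cong) (metis g0 hg mult_zero_left)
  finally have "infsum (\<lambda>x. (cmod (h x))\<^sup>2) UNIV = infsum (\<lambda>x. (cmod (g x))\<^sup>2) UNIV"
    using l2inner_self[OF h] l2inner_self[OF g] by simp
  then have "h = g" by (intro l2_eq_if_eq_on_support[OF g h g0 hg])
  then show ?thesis unfolding h_def .
qed

lemma coord_proj_l2: "f \<in> l2 \<Longrightarrow> coord_proj A f \<in> l2"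
  by (rule l2_dominated[of f]) (auto simp: coord_proj_def indicator_def norm_mult)

lemma l2norm_coord_proj_le:
  assumes "f \<in> l2"
  shows "l2norm (coord_proj A f) \<le> l2norm f"
proof -
  have "infsum (\<lambda>x. (cmod (coord_proj A f x))\<^sup>2) UNIV \<le> infsum (\<lambda>x. (cmod (f x))\<^sup>2) UNIV"
    by (rule infsum_mono)
       (use l2_summable[OF assms] l2_summable[OF coord_proj_l2[OF assms]] in
        \<open>auto simp: coord_proj_def indicator_def norm_mult\<close>)
  then show ?thesis unfolding l2norm_def by simp
qed

lemma bop_coord_proj: "bop (coord_proj A)"
  unfolding bop_def
proof (intro conjI ballI allI)
  show "\<exists>C. \<forall>f\<in>l2. l2norm (coord_proj A f) \<le> C * l2norm f"
    by (rule exI[of _ 1]) (simp add: l2norm_coord_proj_le)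
qed (auto simp: coord_proj_l2 coord_proj_def algebra_simps)

lemma bproj_coord_proj: "bproj (coord_proj A)"
  unfolding bproj_def op_eq_def l2inner_def
  by (auto simp: bop_coord_proj coord_proj_def indicator_def intro!: infsum_cong)

lemma coord_proj_Un:
  "A \<inter> B = {} \<Longrightarrow> coord_proj (A \<union> B) = op_lin 1 (coord_proj A) 1 (coord_proj B)"
  by (auto simp: fun_eq_iff coord_proj_def op_lin_def indicator_def)

lemma coord_proj_UNIV: "coord_proj UNIV = id"
  by (auto simp: fun_eq_iff coord_proj_def)

lemma coord_proj_basis_vec: "x \<in> A \<Longrightarrow> coord_proj A (basis_vec x) = basis_vec x"
  by (auto simp: fun_eq_iff coord_proj_def basis_vec_def indicator_def)

text \<open>No summability is needed: \<open>infsum\<close> of a non-summable function is \<open>0\<close>.\<close>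
lemma cnonneg_l2inner_coord_proj: "cnonneg (l2inner (coord_proj A f) f)"
proof (cases "(\<lambda>x. coord_proj A f x * cnj (f x)) summable_on UNIV")
  case True
  have "0 \<le> l2inner (coord_proj A f) f" unfolding l2inner_def
    by (rule infsum_nonneg_complex[OF True])
       (auto simp: coord_proj_def indicator_def complex_mult_cnj less_eq_complex_def)
  then show ?thesis by (simp add: cnonneg_def less_eq_complex_def)
next
  case False
  then show ?thesis by (simp add: l2inner_def infsum_not_exists cnonneg_def)
qed

lemma bproj_sup_coord_proj: "bproj_sup (\<lambda>n. coord_proj (A n)) (coord_proj (\<Union>n. A n))"
  unfolding bproj_sup_def
proof (intro conjI allI impI)
  show "bproj (coord_proj (\<Union>n. A n))" by (rule bproj_coord_proj)
  show "bproj_le (coord_proj (A n)) (coord_proj (\<Union>n. A n))" for n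
    by (auto simp: bproj_le_def op_eq_def coord_proj_def indicator_def fun_eq_iff)
  fix R assume R: "bproj R \<and> (\<forall>n. bproj_le (coord_proj (A n)) R)"
  have "R (basis_vec x) = basis_vec x" if x: "x \<in> (\<Union>n. A n)" for x
  proof -
    obtain n where "x \<in> A n" using x by blast
    then show ?thesis
      using R basis_vec_in_l2[of x] coord_proj_basis_vec[of x "A n"]
      unfolding bproj_le_def op_eq_def by (metis comp_apply)
  qed
  then have "R (coord_proj (\<Union>n. A n) f) = coord_proj (\<Union>n. A n) f" if "f \<in> l2" for f
    using R by (intro bproj_fixes_if_fixes_basis[of R "\<Union>n. A n", OF _ _ coord_proj_l2[OF that]])
      (auto simp: coord_proj_def)
  then show "bproj_le (coord_proj (\<Union>n. A n)) R"
    unfolding bproj_le_def op_eq_def by simp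
qed

lemma cpt_op_coord_proj_singleton: "cpt_op (coord_proj {a})"
  unfolding cpt_op_def
proof (intro conjI allI impI)
  show "bop (coord_proj {a})" by (rule bop_coord_proj)
  fix f :: "nat \<Rightarrow> 'a \<Rightarrow> complex" assume f: "\<forall>n. f n \<in> l2 \<and> l2norm (f n) \<le> 1"
  define c where "c n = f n a" for n
  have "cmod (c n) \<le> 1" for n
    using f norm_le_l2norm[of "f n" a] unfolding c_def by (meson order_trans)
  then have "bounded (range c)" unfolding bounded_iff by blast
  then obtain l r where r: "strict_mono r" "(c \<circ> r) \<longlonglongrightarrow> l"
    using bounded_imp_convergent_subsequence by blast
  have "Cauchy (c \<circ> r)" using r(2) by (rule LIMSEQ_imp_Cauchy)
  then have "\<forall>e>0. \<exists>N. \<forall>m\<ge>N. \<forall>n\<ge>N. cmod (c (r m) - c (r n)) < e"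
    unfolding Cauchy_def dist_norm by simp
  moreover have "l2norm (\<lambda>x. coord_proj {a} (f m) x - coord_proj {a} (f n) x) = cmod (c m - c n)"
    for m n
    unfolding l2norm_def
    by (subst infsum_UNIV_eq_single[of a]) (auto simp: coord_proj_def c_def)
  ultimately show "\<exists>r::nat\<Rightarrow>nat. strict_mono r \<and> (\<forall>e>0. \<exists>N. \<forall>m\<ge>N. \<forall>n\<ge>N.
      l2norm (\<lambda>x. coord_proj {a} (f (r m)) x - coord_proj {a} (f (r n)) x) < e)"
    using r(1) by auto
qed

text \<open>An \<open>l\<^sup>2\<close>-Cauchy sequence cannot stay large along an injective sequence of
  coordinates: its terms eventually stay close to a single \<open>l\<^sup>2\<close> vector, which has
  only finitely many large coordinates.\<close>
lemma l2_Cauchy_not_large_along_inj: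
  fixes g :: "nat \<Rightarrow> 'k \<Rightarrow> complex"
  assumes g: "\<And>n. g n \<in> l2"
    and Cauchy: "\<forall>e>0. \<exists>N. \<forall>m\<ge>N. \<forall>n\<ge>N. l2norm (\<lambda>x. g m x - g n x) < e"
    and y: "inj y" and e: "e > 0"
  shows "\<not> (\<forall>n. e \<le> cmod (g n (y n)))"
proof
  assume large: "\<forall>n. e \<le> cmod (g n (y n))"
  from Cauchy e obtain N where N: "\<forall>m\<ge>N. \<forall>n\<ge>N. l2norm (\<lambda>x. g m x - g n x) < e / 2"
    by (meson half_gt_zero)
  have "e / 2 \<le> cmod (g N (y n))" if "n \<ge> N" for n
  proof -
    have "cmod (g n (y n) - g N (y n)) \<le> l2norm (\<lambda>x. g n x - g N x)"
      using norm_le_l2norm[OF l2_diff[OF g g]] by simp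
    moreover have "cmod (g n (y n)) \<le> cmod (g n (y n) - g N (y n)) + cmod (g N (y n))"
      using norm_triangle_ineq2[of "g n (y n)" "g N (y n)"] by simp
    moreover have "l2norm (\<lambda>x. g n x - g N x) < e / 2" using N that by (meson order_refl)
    ultimately show ?thesis using large[rule_format, of n] by linarith
  qed
  then have "y ` {N..} \<subseteq> {x. e / 2 \<le> cmod (g N x)}" by auto
  then have "finite (y ` {N..})"
    using finite_l2_large_coords[OF g, of "e / 2" N] e finite_subset by auto
  then show False
    using finite_imageD[OF _ inj_on_subset[OF y]] infinite_Ici[of N] by blast
qed

lemma cpt_op_diag_finite:
  assumes T: "cpt_op T" and e: "e > 0"
  shows "finite {x. e \<le> cmod (T (basis_vec x) x)}"
proof (rule ccontr)
  assume "infinite {x. e \<le> cmod (T (basis_vec x) x)}"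
  then obtain s :: "nat \<Rightarrow> 'a" where s: "inj s" "range s \<subseteq> {x. e \<le> cmod (T (basis_vec x) x)}"
    using infinite_countable_subset by blast
  have "\<forall>n. basis_vec (s n) \<in> l2 \<and> l2norm (basis_vec (s n)) \<le> 1"
    by (simp add: basis_vec_in_l2)
  then obtain r :: "nat \<Rightarrow> nat" where r: "strict_mono r" and
    Cauchy: "\<forall>e>0. \<exists>N. \<forall>m\<ge>N. \<forall>n\<ge>N.
      l2norm (\<lambda>x. T (basis_vec (s (r m))) x - T (basis_vec (s (r n))) x) < e"
    using T[unfolded cpt_op_def, THEN conjunct2, rule_format, of "\<lambda>n. basis_vec (s n)"] by blast
  have inj: "inj (s \<circ> r)" by (rule inj_compose[OF s(1) strict_mono_imp_inj_on[OF r]])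
  have "bop T" using T unfolding cpt_op_def by blast
  then have l2: "T (basis_vec (s (r n))) \<in> l2" for n by (simp add: bop_l2 basis_vec_in_l2)
  have "\<forall>n. e \<le> cmod (T (basis_vec (s (r n))) ((s \<circ> r) n))" using s(2) by auto
  then show False using l2_Cauchy_not_large_along_inj[OF l2 Cauchy inj e] by blast
qed

lemma bproj_sup_vanishes:
  assumes sup: "bproj_sup q Q" and q: "\<And>n. bproj (q n)" and diag: "\<forall>n. q n (basis_vec x) x = 0"
  shows "Q (basis_vec x) x = 0"
proof -
  have "bproj_le (q n) (coord_proj (- {x}))" for n
    unfolding bproj_le_def op_eq_def
  proof
    fix f :: "'a \<Rightarrow> complex" assume "f \<in> l2"
    then have "q n f x = 0" using bproj_vanishes_if_diag_eq_0[OF q] diag by blast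
    then show "(coord_proj (- {x}) \<circ> q n) f = q n f"
      by (auto simp: coord_proj_def fun_eq_iff indicator_def)
  qed
  then have "bproj_le Q (coord_proj (- {x}))"
    using sup bproj_coord_proj[of "- {x}"] unfolding bproj_sup_def by simp
  then have "(coord_proj (- {x}) \<circ> Q) (basis_vec x) = Q (basis_vec x)"
    using basis_vec_in_l2[of x] unfolding bproj_le_def op_eq_def by blast
  then have "coord_proj (- {x}) (Q (basis_vec x)) x = Q (basis_vec x) x" by simp
  then show ?thesis by (simp add: coord_proj_def)
qed

lemma linf_bounded: "f \<in> linf \<Longrightarrow> \<exists>B. \<forall>x. cmod (f x) \<le> B"
  unfolding linf_def bounded_iff by auto

lemma cnonneg_linf_proj:
  assumes "linf_proj p"
  shows "cnonneg (p x)"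
proof -
  have "p x * p x = p x" using assms unfolding linf_proj_def by blast
  then have "p x = 0 \<or> p x = 1" by (metis mult_cancel_left2 mult_left_cancel)
  then show ?thesis by (auto simp: cnonneg_def)
qed

lemma linf_proj_indicator: "linf_proj (indicator A :: 'k \<Rightarrow> complex)"
  unfolding linf_proj_def linf_def bounded_iff by (auto simp: indicator_def intro!: exI[of _ 1])

lemma linf_proj_sup_indicator:
  "linf_proj_sup (\<lambda>n. indicator (A n) :: 'k \<Rightarrow> complex) (indicator (\<Union>n. A n))"
  unfolding linf_proj_sup_def
proof (intro conjI allI impI)
  show "linf_proj (indicator (\<Union>n. A n) :: 'k \<Rightarrow> complex)" by (rule linf_proj_indicator)
  show "linf_proj_le (indicator (A n)) (indicator (\<Union>n. A n) :: 'k \<Rightarrow> complex)" for n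
    unfolding linf_proj_le_def by (auto simp: indicator_def)
  fix R :: "'k \<Rightarrow> complex" assume R: "linf_proj R \<and> (\<forall>n. linf_proj_le (indicator (A n)) R)"
  have "R x = 1" if "x \<in> A n" for x n
    using R that unfolding linf_proj_le_def by (metis indicator_simps(1) mult.right_neutral)
  then show "linf_proj_le (indicator (\<Union>n. A n)) R"
    unfolding linf_proj_le_def by (auto simp: indicator_def)
qed

lemma linf_proj_sup_vanishes:
  assumes "linf_proj_sup q Q" "\<forall>n. q n x = 0"
  shows "Q x = 0"
proof -
  let ?R = "indicator {y. \<exists>n. q n y \<noteq> 0} :: 'a \<Rightarrow> complex"
  have "linf_proj_le (q n) ?R" for n
    unfolding linf_proj_le_def by (auto simp: indicator_def)
  then have "linf_proj_le Q ?R"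
    using assms(1) linf_proj_indicator unfolding linf_proj_sup_def by blast
  then show ?thesis using assms(2) unfolding linf_proj_le_def by (force simp: indicator_def)
qed

section \<open>Ulam's theorem for \<open>\<aleph>\<^sub>1\<close>\<close>

locale diffuse_charge =
  fixes \<nu> :: "'a set \<Rightarrow> real"
  assumes nonneg: "\<And>A. 0 \<le> \<nu> A"
    and total: "\<nu> UNIV = 1"
    and additive: "\<And>A B. A \<inter> B = {} \<Longrightarrow> \<nu> (A \<union> B) = \<nu> A + \<nu> B"
    and null_UN: "\<And>A :: nat \<Rightarrow> 'a set. (\<And>n. \<nu> (A n) = 0) \<Longrightarrow> \<nu> (\<Union>n. A n) = 0"
    and singleton: "\<And>x. \<nu> {x} = 0"
begin

lemma empty: "\<nu> {} = 0"
  using additive[of "{}" "{}"] by simp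

lemma mono: "A \<subseteq> B \<Longrightarrow> \<nu> A \<le> \<nu> B"
  using additive[of A "B - A"] nonneg[of "B - A"] by (simp add: Un_absorb1)

lemma subadditive: "\<nu> (A \<union> B) \<le> \<nu> A + \<nu> B"
  using additive[of A "B - A"] mono[of "B - A" B] by simp

lemma countable_null: "countable C \<Longrightarrow> \<nu> C = 0"
proof (cases "C = {}")
  case False
  assume "countable C"
  then have "C = (\<Union>n. {from_nat_into C n})"
    using range_from_nat_into[OF False] by auto
  then show ?thesis using null_UN[of "\<lambda>n. {from_nat_into C n}"] singleton by simp
qed (simp add: empty)

lemma sum_disjoint:
  assumes "finite F" "disjoint_family_on A F"
  shows "\<nu> (\<Union>\<alpha>\<in>F. A \<alpha>) = (\<Sum>\<alpha>\<in>F. \<nu> (A \<alpha>))"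
  using assms
proof (induction F rule: finite_induct)
  case (insert \<alpha> F)
  have "disjoint_family_on A F"
    by (rule disjoint_family_on_mono[OF subset_insertI insert.prems])
  moreover have "A \<alpha> \<inter> (\<Union>\<beta>\<in>F. A \<beta>) = {}"
    using insert.prems insert.hyps(2) unfolding disjoint_family_on_def by auto
  ultimately show ?case using insert.IH insert.hyps by (simp add: additive)
qed (simp add: empty)

lemma countable_positive:
  assumes "disjoint_family_on A S"
  shows "countable {\<alpha>\<in>S. 0 < \<nu> (A \<alpha>)}"
proof -
  have fin: "finite {\<alpha>\<in>S. 1 / real (Suc k) < \<nu> (A \<alpha>)}" for k
  proof (rule ccontr)
    assume "infinite {\<alpha>\<in>S. 1 / real (Suc k) < \<nu> (A \<alpha>)}"
    then obtain F where F: "F \<subseteq> {\<alpha>\<in>S. 1 / real (Suc k) < \<nu> (A \<alpha>)}" "finite F" "card F = Suc k"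
      using infinite_arbitrarily_large by blast
    then have "disjoint_family_on A F"
      using disjoint_family_on_mono[OF _ assms] by blast
    have "1 = (\<Sum>\<alpha>\<in>F. 1 / real (Suc k))" using F(3) by simp
    also have "\<dots> < (\<Sum>\<alpha>\<in>F. \<nu> (A \<alpha>))"
      using F by (intro sum_strict_mono) auto
    also have "\<dots> = \<nu> (\<Union>\<alpha>\<in>F. A \<alpha>)"
      using sum_disjoint[OF F(2) \<open>disjoint_family_on A F\<close>] by simp
    also have "\<dots> \<le> 1" using mono[of _ UNIV] total by simp
    finally show False by simp
  qed
  have eq: "{\<alpha>\<in>S. 0 < \<nu> (A \<alpha>)} = (\<Union>k. {\<alpha>\<in>S. 1 / real (Suc k) < \<nu> (A \<alpha>)})"
  proof (intro equalityI subsetI)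
    fix \<alpha> assume "\<alpha> \<in> {\<alpha>\<in>S. 0 < \<nu> (A \<alpha>)}"
    then show "\<alpha> \<in> (\<Union>k. {\<alpha>\<in>S. 1 / real (Suc k) < \<nu> (A \<alpha>)})"
      using reals_Archimedean[of "\<nu> (A \<alpha>)"] by (auto simp: inverse_eq_divide)
  next
    fix \<alpha> assume "\<alpha> \<in> (\<Union>k. {\<alpha>\<in>S. 1 / real (Suc k) < \<nu> (A \<alpha>)})"
    then obtain k where "\<alpha> \<in> S" "1 / real (Suc k) < \<nu> (A \<alpha>)" by blast
    moreover have "0 < 1 / real (Suc k)" by simp
    ultimately show "\<alpha> \<in> {\<alpha>\<in>S. 0 < \<nu> (A \<alpha>)}" using less_trans by blast
  qed
  show ?thesis
    unfolding eq by (rule countable_UN[OF _ countable_finite[OF fin]]) simp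
qed

end

text \<open>Ulam's matrix: for \<open>\<aleph>\<^sub>1\<close>, the sets \<open>P \<beta>\<close> are the initial segments of a
  well-order of type \<open>\<omega>\<^sub>1\<close>, and \<open>U n \<alpha>\<close> collects the \<open>\<beta>\<close> in whose enumeration of
  \<open>P \<beta>\<close> the element \<open>\<alpha>\<close> has index \<open>n\<close>.\<close>
lemma not_diffuse_charge_if_countable_segments:
  fixes P :: "'a \<Rightarrow> 'a set" and \<nu> :: "'a set \<Rightarrow> real"
  assumes P: "\<And>\<beta>. countable (P \<beta>)" and cofinal: "\<And>\<alpha>. countable {\<beta>. \<alpha> \<notin> P \<beta>}"
  shows "\<not> diffuse_charge \<nu>"
proof
  assume "diffuse_charge \<nu>"
  then interpret diffuse_charge \<nu> .
  define U where "U n \<alpha> = {\<beta>. \<alpha> \<in> P \<beta> \<and> to_nat_on (P \<beta>) \<alpha> = n}" for n \<alpha>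
  have disj: "disjoint_family (U n)" for n
    unfolding disjoint_family_on_def U_def
    using inj_on_to_nat_on[OF P] by (auto dest: inj_onD)
  have "\<exists>n. 0 < \<nu> (U n \<alpha>)" for \<alpha>
  proof (rule ccontr)
    assume "\<not> ?thesis"
    then have "\<nu> (\<Union>n. U n \<alpha>) = 0" by (intro null_UN) (meson nonneg not_less order.antisym)
    moreover have "UNIV = {\<beta>. \<alpha> \<notin> P \<beta>} \<union> (\<Union>n. U n \<alpha>)" unfolding U_def by auto
    ultimately have "\<nu> UNIV \<le> 0"
      using subadditive[of "{\<beta>. \<alpha> \<notin> P \<beta>}" "\<Union>n. U n \<alpha>"] countable_null[OF cofinal] by simp
    then show False using total by simp
  qed
  then have "(\<Union>n. {\<alpha>. 0 < \<nu> (U n \<alpha>)}) = UNIV" by blast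
  moreover have "countable (\<Union>n. {\<alpha>. 0 < \<nu> (U n \<alpha>)})"
    using countable_positive[OF disj] by (intro countable_UN) simp_all
  ultimately have "countable (UNIV :: 'a set)" by simp
  then have "\<nu> UNIV = 0" by (rule countable_null)
  with total show False by simp
qed

lemma aleph1_countable_segments:
  assumes "is_aleph1 TYPE('k)"
  obtains P :: "'k \<Rightarrow> 'k set"
    where "\<And>\<beta>. countable (P \<beta>)" "\<And>\<alpha>. countable {\<beta>. \<alpha> \<notin> P \<beta>}"
proof
  let ?r = "card_of (UNIV :: 'k set)"
  have iso: "(?r, cardSuc natLeq) \<in> ordIso" using assms unfolding is_aleph1_def by simp
  have small: "countable X" if "(card_of X, ?r) \<in> ordLess" for X :: "'k set"
  proof -
    have "(card_of X, cardSuc natLeq) \<in> ordLess" using that iso ordLess_ordIso_trans by blast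
    then have "(card_of X, natLeq) \<in> ordLeq"
      using cardSuc_ordLeq_ordLess[OF natLeq_Card_order card_of_Card_order] by blast
    then show ?thesis using countable_card_le_natLeq by blast
  qed
  show segment: "countable (underS ?r \<beta>)" for \<beta>
    by (rule small, rule card_of_underS[OF card_of_Card_order]) (simp add: Field_card_of)
  have total: "(x, y) \<in> ?r \<or> (y, x) \<in> ?r" for x y
    using card_of_Well_order[of "UNIV :: 'k set"]
    unfolding well_order_on_def linear_order_on_def total_on_def partial_order_on_def
      preorder_on_def refl_on_def
    by (metis Field_card_of UNIV_I card_of_Field_ordIso iso ordIso_symmetric)
  have "{\<beta>. \<alpha> \<notin> underS ?r \<beta>} \<subseteq> insert \<alpha> (underS ?r \<alpha>)" for \<alpha>
    using total unfolding underS_def by auto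
  then show "countable {\<beta>. \<alpha> \<notin> underS ?r \<beta>}" for \<alpha>
    by (meson countable_insert countable_subset segment)
qed

lemma aleph1_not_diffuse_charge:
  assumes "is_aleph1 TYPE('k)"
  shows "\<not> diffuse_charge (\<nu> :: 'k set \<Rightarrow> real)"
proof -
  obtain P :: "'k \<Rightarrow> 'k set" where "\<And>\<beta>. countable (P \<beta>)" "\<And>\<alpha>. countable {\<beta>. \<alpha> \<notin> P \<beta>}"
    using aleph1_countable_segments[OF assms] by blast
  then show ?thesis by (rule not_diffuse_charge_if_countable_segments)
qed

section \<open>Regular singular states induce diffuse charges\<close>

lemma linf_state_diffuse_charge:
  fixes \<phi> :: "('k \<Rightarrow> complex) \<Rightarrow> complex"
  assumes st: "linf_state \<phi>" and reg: "linf_regular \<phi>" and sg: "linf_singular \<phi>"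
  shows "diffuse_charge (\<lambda>A. Re (\<phi> (indicator A :: 'k \<Rightarrow> complex)))"
proof -
  have ind_linf: "indicator A \<in> linf" for A :: "'k set"
    using linf_proj_indicator unfolding linf_proj_def by blast
  have pos: "cnonneg (\<phi> (indicator A))" for A :: "'k set"
    using st ind_linf unfolding linf_state_def cnonneg_def by (simp add: indicator_def)
  then have real: "\<phi> (indicator A) = of_real (Re (\<phi> (indicator A)))" for A :: "'k set"
    unfolding cnonneg_def by (simp add: complex_eqI)
  show ?thesis
  proof
    show "0 \<le> Re (\<phi> (indicator A))" for A using pos unfolding cnonneg_def by simp
    show "Re (\<phi> (indicator UNIV)) = 1" using st unfolding linf_state_def by simp
    show "Re (\<phi> (indicator (A \<union> B))) = Re (\<phi> (indicator A)) + Re (\<phi> (indicator B))"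
      if "A \<inter> B = {}" for A B :: "'k set"
    proof -
      have "\<phi> (\<lambda>x. 1 * indicator A x + 1 * indicator B x) = 1 * \<phi> (indicator A) + 1 * \<phi> (indicator B)"
        using st ind_linf unfolding linf_state_def by blast
      moreover have "indicator (A \<union> B) = (\<lambda>x. 1 * indicator A x + 1 * indicator B x :: complex)"
        using that by (auto simp: indicator_def fun_eq_iff)
      ultimately have "\<phi> (indicator (A \<union> B)) = \<phi> (indicator A) + \<phi> (indicator B)" by simp
      then show ?thesis by simp
    qed
    show "Re (\<phi> (indicator (\<Union>n. A n))) = 0" if "\<And>n. Re (\<phi> (indicator (A n))) = 0"
      for A :: "nat \<Rightarrow> 'k set"
      using reg linf_proj_indicator linf_proj_sup_indicator that real
      unfolding linf_regular_def by (metis of_real_0 zero_complex.sel(1))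
    show "Re (\<phi> (indicator {x})) = 0" for x
      using sg unfolding linf_singular_def by (simp add: indicator_def)
  qed
qed

lemma bl2_state_diffuse_charge:
  fixes \<psi> :: "'k l2op \<Rightarrow> complex"
  assumes st: "bl2_state \<psi>" and reg: "bl2_regular \<psi>" and sg: "bl2_singular \<psi>"
  shows "diffuse_charge (\<lambda>A. Re (\<psi> (coord_proj A)))"
proof -
  have pos: "cnonneg (\<psi> (coord_proj A))" for A :: "'k set"
    using st bop_coord_proj cnonneg_l2inner_coord_proj unfolding bl2_state_def by blast
  then have real: "\<psi> (coord_proj A) = of_real (Re (\<psi> (coord_proj A)))" for A :: "'k set"
    unfolding cnonneg_def by (simp add: complex_eqI)
  show ?thesis
  proof
    show "0 \<le> Re (\<psi> (coord_proj A))" for A using pos unfolding cnonneg_def by simp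
    show "Re (\<psi> (coord_proj UNIV)) = 1" using st unfolding bl2_state_def coord_proj_UNIV by simp
    show "Re (\<psi> (coord_proj (A \<union> B))) = Re (\<psi> (coord_proj A)) + Re (\<psi> (coord_proj B))"
      if "A \<inter> B = {}" for A B :: "'k set"
    proof -
      have "\<psi> (op_lin 1 (coord_proj A) 1 (coord_proj B)) = 1 * \<psi> (coord_proj A) + 1 * \<psi> (coord_proj B)"
        using st bop_coord_proj unfolding bl2_state_def by blast
      then show ?thesis unfolding coord_proj_Un[OF that] by simp
    qed
    show "Re (\<psi> (coord_proj (\<Union>n. A n))) = 0" if "\<And>n. Re (\<psi> (coord_proj (A n))) = 0"
      for A :: "nat \<Rightarrow> 'k set"
      using reg bproj_coord_proj bproj_sup_coord_proj that real
      unfolding bl2_regular_def by (metis of_real_0 zero_complex.sel(1))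
    show "Re (\<psi> (coord_proj {x})) = 0" for x
      using sg cpt_op_coord_proj_singleton[of x] unfolding bl2_singular_def by simp
  qed
qed

section \<open>Diffuse probability measures induce regular singular states\<close>

lemma ulam_rvm_prob_space:
  assumes "ulam_rvm TYPE('k)"
  obtains M :: "'k measure"
    where "sets M = UNIV" "prob_space M" "\<And>x. emeasure M {x} = 0"
proof -
  obtain \<mu> :: "'k set \<Rightarrow> real" where nonneg: "\<And>A. 0 \<le> \<mu> A" and total: "\<mu> UNIV = 1"
    and singleton: "\<And>x. \<mu> {x} = 0"
    and sums: "\<And>A :: nat \<Rightarrow> 'k set. disjoint_family A \<Longrightarrow> (\<lambda>n. \<mu> (A n)) sums \<mu> (\<Union>n. A n)"
    using assms unfolding ulam_rvm_def by blast
  have "(\<lambda>n. \<mu> {}) sums \<mu> (\<Union>n::nat. {})" by (rule sums) (simp add: disjoint_family_on_def)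
  then have "(\<lambda>n. \<mu> {}) \<longlonglongrightarrow> 0" by (intro summable_LIMSEQ_zero) (simp add: sums_summable)
  then have empty: "\<mu> {} = 0" by (simp add: LIMSEQ_const_iff)
  define M where "M = measure_of UNIV (Pow UNIV) (\<lambda>A. ennreal (\<mu> A))"
  have "positive (Pow UNIV) (\<lambda>A. ennreal (\<mu> A))"
    unfolding positive_def using empty by simp
  moreover have "countably_additive (Pow UNIV) (\<lambda>A. ennreal (\<mu> A))"
    unfolding countably_additive_def
  proof (intro allI impI)
    fix A :: "nat \<Rightarrow> 'k set" assume "disjoint_family A"
    then have "(\<lambda>n. ennreal (\<mu> (A n))) sums ennreal (\<mu> (\<Union>n. A n))"
      using sums nonneg by simp
    then show "(\<Sum>n. ennreal (\<mu> (A n))) = ennreal (\<mu> (\<Union>n. A n))"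
      by (rule sums_unique[symmetric])
  qed
  ultimately have emeasure: "emeasure M A = ennreal (\<mu> A)" for A
    unfolding M_def by (rule emeasure_measure_of_sigma[OF sigma_algebra_Pow]) simp
  have "sets M = UNIV"
    unfolding M_def using sigma_algebra.sigma_sets_eq[OF sigma_algebra_Pow[of UNIV]] by simp
  moreover have "space M = UNIV" unfolding M_def by simp
  then have "prob_space M" by (intro prob_spaceI) (simp add: emeasure total)
  ultimately show ?thesis using that emeasure singleton by simp
qed

definition diag_integral :: "'k measure \<Rightarrow> 'k l2op \<Rightarrow> complex" where
  "diag_integral M T = (\<integral>x. T (basis_vec x) x \<partial>M)"

locale diffuse_discrete_prob_space = prob_space M for M :: "'a measure" +
  assumes sets_eq_UNIV: "sets M = UNIV"
    and emeasure_singleton: "\<And>x. emeasure M {x} = 0"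
begin

lemma space_eq_UNIV: "space M = UNIV"
  using sets.sets_into_space[of UNIV] sets_eq_UNIV by auto

lemma integrable_bounded:
  fixes f :: "'a \<Rightarrow> 'b::{banach, second_countable_topology}"
  assumes "\<And>x. norm (f x) \<le> B"
  shows "integrable M f"
  by (rule integrable_const_bound[where B=B])
     (use assms in \<open>auto simp: measurable_def sets_eq_UNIV space_eq_UNIV\<close>)

lemma null_sets_finite: "finite S \<Longrightarrow> S \<in> null_sets M"
  using null_sets_UN'[of S "\<lambda>x. {x}"]
  by (simp add: countable_finite null_sets_def sets_eq_UNIV emeasure_singleton)

lemma AE_cofinite: "finite {x. \<not> P x} \<Longrightarrow> AE x in M. P x"
  by (rule AE_I'[OF null_sets_finite]) (auto simp: space_eq_UNIV)

lemma cnonneg_integral: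
  assumes bounded: "\<And>x. cmod (f x) \<le> B" and nonneg: "\<And>x. cnonneg (f x)"
  shows "cnonneg (integral\<^sup>L M f)"
proof -
  have int: "integrable M f" by (rule integrable_bounded[OF bounded])
  have "Im (integral\<^sup>L M f) = 0"
    using integral_Im[OF int] nonneg by (simp add: cnonneg_def)
  moreover have "0 \<le> integral\<^sup>L M (\<lambda>x. Re (f x))"
    by (rule integral_nonneg_AE) (use nonneg in \<open>simp add: cnonneg_def\<close>)
  ultimately show ?thesis
    using integral_Re[OF int] by (simp add: cnonneg_def)
qed

lemma AE_eq_0_if_integral_eq_0:
  assumes bounded: "\<And>x. cmod (f x) \<le> B" and nonneg: "\<And>x. cnonneg (f x)"
    and zero: "integral\<^sup>L M f = 0"
  shows "AE x in M. f x = 0"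
proof -
  have "integral\<^sup>L M (\<lambda>x. Re (f x)) = 0"
    using integral_Re[OF integrable_bounded[OF bounded]] zero by simp
  moreover have "integrable M (\<lambda>x. Re (f x))"
    using bounded abs_Re_le_cmod order_trans by (intro integrable_bounded[where B=B]) fastforce
  moreover have "AE x in M. 0 \<le> Re (f x)"
    using nonneg unfolding cnonneg_def by simp
  ultimately have "AE x in M. Re (f x) = 0"
    using integral_nonneg_eq_0_iff_AE by blast
  then show ?thesis
    by eventually_elim (use nonneg in \<open>simp add: cnonneg_def complex_eq_iff\<close>)
qed

lemma linf_state_integral: "linf_state (integral\<^sup>L M)"
  unfolding linf_state_def
proof (intro conjI ballI allI impI)
  have int: "integrable M f" if "f \<in> linf" for f :: "'a \<Rightarrow> complex"
    using linf_bounded[OF that] integrable_bounded by blast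
  show "integral\<^sup>L M (\<lambda>x. a * f x + b * g x) = a * integral\<^sup>L M f + b * integral\<^sup>L M g"
    if "f \<in> linf" "g \<in> linf" for a b and f g :: "'a \<Rightarrow> complex"
    using int[OF that(1)] int[OF that(2)] by simp
  show "cnonneg (integral\<^sup>L M f)" if "f \<in> linf" "\<forall>x. cnonneg (f x)" for f :: "'a \<Rightarrow> complex"
    using linf_bounded[OF that(1)] that(2) cnonneg_integral by blast
  show "integral\<^sup>L M (\<lambda>_. 1) = (1 :: complex)" using prob_space by simp
qed

lemma linf_singular_integral: "linf_singular (integral\<^sup>L M)"
  unfolding linf_singular_def by (auto intro!: integral_eq_zero_AE AE_cofinite)

lemma linf_regular_integral: "linf_regular (integral\<^sup>L M)"
  unfolding linf_regular_def
proof (intro allI impI)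
  fix q :: "nat \<Rightarrow> 'a \<Rightarrow> complex" and Q
  assume a: "(\<forall>n. linf_proj (q n)) \<and> linf_proj_sup q Q \<and> (\<forall>n. integral\<^sup>L M (q n) = 0)"
  have "AE x in M. q n x = 0" for n
  proof -
    obtain B where B: "\<And>x. cmod (q n x) \<le> B"
      using a linf_bounded unfolding linf_proj_def by blast
    show ?thesis
      by (rule AE_eq_0_if_integral_eq_0[OF B]) (simp_all add: a cnonneg_linf_proj)
  qed
  then have "AE x in M. \<forall>n. q n x = 0" by (simp add: AE_all_countable)
  moreover have "linf_proj_sup q Q" using a by blast
  ultimately have "AE x in M. Q x = 0"
    by (auto elim: AE_mp intro: linf_proj_sup_vanishes)
  then show "integral\<^sup>L M Q = 0" by (rule integral_eq_zero_AE)
qed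

lemma integrable_diag:
  assumes "bop T"
  shows "integrable M (\<lambda>x. T (basis_vec x) x)"
proof -
  obtain C where "\<And>x. cmod (T (basis_vec x) x) \<le> C"
    using bop_diag_bounded[OF assms] by blast
  then show ?thesis by (rule integrable_bounded)
qed

lemma bl2_state_diag_integral: "bl2_state (diag_integral M)"
  unfolding bl2_state_def diag_integral_def
proof (intro conjI allI impI)
  show "(\<integral>x. op_lin a S b T (basis_vec x) x \<partial>M) =
      a * (\<integral>x. S (basis_vec x) x \<partial>M) + b * (\<integral>x. T (basis_vec x) x \<partial>M)"
    if "bop S \<and> bop T" for a b and S T :: "'a l2op"
    using integrable_diag[of S] integrable_diag[of T] that by (simp add: op_lin_def)
  show "cnonneg (\<integral>x. T (basis_vec x) x \<partial>M)"
    if T: "bop T \<and> (\<forall>f\<in>l2. cnonneg (l2inner (T f) f))" for T :: "'a l2op"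
  proof -
    obtain C where C: "\<And>x. cmod (T (basis_vec x) x) \<le> C"
      using T bop_diag_bounded by blast
    have "cnonneg (T (basis_vec x) x)" for x
      using T basis_vec_in_l2[of x] by (metis l2inner_basis_vec)
    then show ?thesis by (rule cnonneg_integral[OF C])
  qed
  show "(\<integral>x. id (basis_vec x) x \<partial>M) = 1" using prob_space by simp
qed

text \<open>The diagonal of a compact operator tends to zero, so it is small outside a finite,
  hence null, set.\<close>
lemma bl2_singular_diag_integral: "bl2_singular (diag_integral M)"
  unfolding bl2_singular_def diag_integral_def
proof (intro allI impI)
  fix T :: "'a l2op" assume T: "cpt_op T"
  have "bop T" using T unfolding cpt_op_def by blast
  then obtain C where C: "\<And>x. cmod (T (basis_vec x) x) \<le> C" using bop_diag_bounded by blast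
  have small: "cmod (\<integral>x. T (basis_vec x) x \<partial>M) \<le> e" if e: "e > 0" for e
  proof -
    have ae: "AE x in M. cmod (T (basis_vec x) x) \<le> e"
      by (rule AE_cofinite, rule finite_subset[OF _ cpt_op_diag_finite[OF T e]]) auto
    have "cmod (\<integral>x. T (basis_vec x) x \<partial>M) \<le> (\<integral>x. cmod (T (basis_vec x) x) \<partial>M)"
      by (rule integral_norm_bound)
    also have "\<dots> \<le> (\<integral>x. e \<partial>M)"
      by (rule integral_mono_AE[OF integrable_bounded[where B=C] _ ae]) (use C in auto)
    also have "\<dots> = e" using prob_space by simp
    finally show ?thesis .
  qed
  show "(\<integral>x. T (basis_vec x) x \<partial>M) = 0"
  proof (rule ccontr)
    assume "(\<integral>x. T (basis_vec x) x \<partial>M) \<noteq> 0"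
    then show False using small[of "cmod (\<integral>x. T (basis_vec x) x \<partial>M) / 2"] by simp
  qed
qed

lemma bl2_regular_diag_integral: "bl2_regular (diag_integral M)"
  unfolding bl2_regular_def diag_integral_def
proof (intro allI impI)
  fix q :: "nat \<Rightarrow> 'a l2op" and Q
  assume a: "(\<forall>n. bproj (q n)) \<and> bproj_sup q Q \<and> (\<forall>n. (\<integral>x. q n (basis_vec x) x \<partial>M) = 0)"
  have "AE x in M. q n (basis_vec x) x = 0" for n
  proof -
    obtain C where C: "\<And>x. cmod (q n (basis_vec x) x) \<le> C"
      using a bproj_bop bop_diag_bounded by blast
    show ?thesis
      by (rule AE_eq_0_if_integral_eq_0[OF C]) (simp_all add: a cnonneg_bproj_diag)
  qed
  then have "AE x in M. \<forall>n. q n (basis_vec x) x = 0" by (simp add: AE_all_countable)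
  moreover have "bproj_sup q Q" "\<And>n. bproj (q n)" using a by blast+
  ultimately have "AE x in M. Q (basis_vec x) x = 0"
    by (auto elim: AE_mp intro: bproj_sup_vanishes)
  then show "(\<integral>x. Q (basis_vec x) x \<partial>M) = 0" by (rule integral_eq_zero_AE)
qed

end

theorem theorem8p5:
  assumes "infinite (UNIV :: 'k set)"
  shows "(is_aleph1 TYPE('k) \<longrightarrow>
            \<not> (\<exists>\<phi> :: ('k \<Rightarrow> complex) \<Rightarrow> complex. linf_state \<phi> \<and> linf_regular \<phi> \<and> linf_singular \<phi>) \<and>
            \<not> (\<exists>\<psi> :: 'k l2op \<Rightarrow> complex. bl2_state \<psi> \<and> bl2_regular \<psi> \<and> bl2_singular \<psi>))
       \<and> (ulam_rvm TYPE('k) \<longrightarrow>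
            (\<exists>\<phi> :: ('k \<Rightarrow> complex) \<Rightarrow> complex. linf_state \<phi> \<and> linf_regular \<phi> \<and> linf_singular \<phi>) \<and>
            (\<exists>\<psi> :: 'k l2op \<Rightarrow> complex. bl2_state \<psi> \<and> bl2_regular \<psi> \<and> bl2_singular \<psi>))"
proof (intro conjI impI)
  assume "is_aleph1 TYPE('k)"
  then have no_charge: "\<not> diffuse_charge (\<nu> :: 'k set \<Rightarrow> real)" for \<nu>
    by (rule aleph1_not_diffuse_charge)
  show "\<not> (\<exists>\<phi> :: ('k \<Rightarrow> complex) \<Rightarrow> complex. linf_state \<phi> \<and> linf_regular \<phi> \<and> linf_singular \<phi>)"
    using linf_state_diffuse_charge no_charge by blast
  show "\<not> (\<exists>\<psi> :: 'k l2op \<Rightarrow> complex. bl2_state \<psi> \<and> bl2_regular \<psi> \<and> bl2_singular \<psi>)"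
    using bl2_state_diffuse_charge no_charge by blast
next
  assume "ulam_rvm TYPE('k)"
  then obtain M :: "'k measure"
    where "sets M = UNIV" "prob_space M" "\<And>x. emeasure M {x} = 0"
    using ulam_rvm_prob_space by blast
  then interpret diffuse_discrete_prob_space M
    by (simp add: diffuse_discrete_prob_space_def diffuse_discrete_prob_space_axioms_def)
  show "\<exists>\<phi> :: ('k \<Rightarrow> complex) \<Rightarrow> complex. linf_state \<phi> \<and> linf_regular \<phi> \<and> linf_singular \<phi>"
    using linf_state_integral linf_regular_integral linf_singular_integral by blast
  show "\<exists>\<psi> :: 'k l2op \<Rightarrow> complex. bl2_state \<psi> \<and> bl2_regular \<psi> \<and> bl2_singular \<psi>"
    using bl2_state_diag_integral bl2_regular_diag_integral bl2_singular_diag_integral by blast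
qed

end
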